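(* There exist admissible sets of types $I(11,7)$, $I(11,6)$ and $I(10,6)$; that is, for each $(m,w)\in\{(11,7),(11,6),(10,6)\}$ there is an admissible set $S\subseteq\{0,1,2\}^m$ consisting of $\binom{m}{w}$ vectors, each of weight $w$.
   Context: A set $S\subseteq\{0,1,2\}^m$ is admissible if (1) for all distinct $s,s'\in S$ there are coordinates $i,j$ with $s_i=0\neq s'_i$ and $s_j\neq 0=s'_j$; and (2) for all distinct $s,s',s''\in S$ there is a coordinate $k$ such that the multiset $\{s_k,s'_k,s''_k\}$ equals $\{0,1,2\}$, $\{0,0,1\}$ or $\{0,0,2\}$. The weight of a vector is its number of nonzero coordinates. *)

theory Defs
  imports "HOL-Library.Multiset"
begin

definition ternary_vectors :: "nat \<Rightarrow> nat list set" where
  "ternary_vectors m = {s. length s = m \<and> (\<forall>i<m. s ! i \<le> 2)}"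

definition weight :: "nat list \<Rightarrow> nat" where
  "weight s = card {i. i < length s \<and> s ! i \<noteq> 0}"

definition admissible :: "nat \<Rightarrow> nat list set \<Rightarrow> bool" where
  "admissible m S \<longleftrightarrow> S \<subseteq> ternary_vectors m \<and>
     (\<forall>s\<in>S. \<forall>s'\<in>S. s \<noteq> s' \<longrightarrow>
        (\<exists>i<m. \<exists>j<m. s ! i = 0 \<and> s' ! i \<noteq> 0 \<and> s ! j \<noteq> 0 \<and> s' ! j = 0)) \<and>
     (\<forall>s\<in>S. \<forall>s'\<in>S. \<forall>s''\<in>S. s \<noteq> s' \<and> s \<noteq> s'' \<and> s' \<noteq> s'' \<longrightarrow>
        (\<exists>k<m. {#s ! k, s' ! k, s'' ! k#} \<in> {{#0,1,2#}, {#0,0,1#}, {#0,0,2#}}))"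

end

(* Fix a relation W on {0,...,m-1} and encode a t-subset T by the vector that vanishes on T
   and, at k outside T, is 1 or 2 according to whether k has an even or an odd number of
   W-neighbours in T.  These vectors have weight m - t, and distinct ones have incomparable
   zero sets, which is condition (1).  For condition (2) take three such sets: a coordinate
   lying in exactly two of them gives a column {0,0,c}.  Otherwise the sets are
   I \<union> A, I \<union> B, I \<union> C with A, B, C disjoint of equal size, and a k in A with an odd
   number of W-neighbours in B \<union> C gives the column {0,1,2}, because the parities of its
   neighbours in I \<union> B and in I \<union> C then differ.  So it suffices that no three such blocks
   all have even cuts inside their union.  For one explicit W on 11 points this is checked by
   exhaustive search, and it passes to m = 10 by restriction. *)

theory Submission
  imports Defs
begin

definition parity_code :: "(nat \<Rightarrow> nat \<Rightarrow> bool) \<Rightarrow> nat \<Rightarrow> nat set \<Rightarrow> nat list" where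
  "parity_code W m T =
     map (\<lambda>k. if k \<in> T then 0 else if odd (card {x \<in> T. W k x}) then 2 else 1) [0..<m]"

definition even_cut :: "('a \<Rightarrow> 'a \<Rightarrow> bool) \<Rightarrow> 'a set \<Rightarrow> 'a set \<Rightarrow> bool" where
  "even_cut W X P \<longleftrightarrow> (\<forall>j\<in>P. even (card {x \<in> X - P. W j x}))"

definition parity_separating :: "('a \<Rightarrow> 'a \<Rightarrow> bool) \<Rightarrow> 'a set \<Rightarrow> bool" where
  "parity_separating W V \<longleftrightarrow>
     (\<forall>A B C. A \<union> B \<union> C \<subseteq> V \<longrightarrow> A \<inter> B = {} \<longrightarrow> A \<inter> C = {} \<longrightarrow> B \<inter> C = {} \<longrightarrow>
        0 < card A \<longrightarrow> card B = card A \<longrightarrow> card C = card A \<longrightarrow>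
        \<not> (even_cut W (A \<union> B \<union> C) A \<and> even_cut W (A \<union> B \<union> C) B \<and> even_cut W (A \<union> B \<union> C) C))"

lemma parity_separating_subset:
  "parity_separating W V \<Longrightarrow> U \<subseteq> V \<Longrightarrow> parity_separating W U"
  unfolding parity_separating_def by (meson subset_trans)

lemma length_parity_code [simp]: "length (parity_code W m T) = m"
  by (simp add: parity_code_def)

lemma nth_parity_code:
  "k < m \<Longrightarrow> parity_code W m T ! k =
     (if k \<in> T then 0 else if odd (card {x \<in> T. W k x}) then 2 else 1)"
  by (simp add: parity_code_def)

lemma parity_code_eq_0_iff: "k < m \<Longrightarrow> parity_code W m T ! k = 0 \<longleftrightarrow> k \<in> T"
  by (simp add: nth_parity_code)

lemma parity_code_zero: "k < m \<Longrightarrow> k \<in> T \<Longrightarrow> parity_code W m T ! k = 0"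
  by (simp add: parity_code_eq_0_iff)

lemma parity_code_nonzero: "k < m \<Longrightarrow> k \<notin> T \<Longrightarrow> parity_code W m T ! k \<in> {1, 2}"
  by (simp add: nth_parity_code)

lemma parity_code_in_ternary_vectors: "parity_code W m T \<in> ternary_vectors m"
  by (simp add: ternary_vectors_def nth_parity_code)

lemma weight_parity_code:
  assumes "T \<subseteq> {..<m}"
  shows "weight (parity_code W m T) = m - card T"
proof -
  have "{i. i < length (parity_code W m T) \<and> parity_code W m T ! i \<noteq> 0} = {..<m} - T"
    by (auto simp: nth_parity_code)
  then show ?thesis
    using assms by (simp add: weight_def card_Diff_subset finite_subset)
qed

lemma inj_on_parity_code: "inj_on (parity_code W m) (Pow {..<m})"
proof (rule inj_onI)
  fix T U assume "T \<in> Pow {..<m}" "U \<in> Pow {..<m}" "parity_code W m T = parity_code W m U"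
  then show "T = U"
    by (metis PowD lessThan_iff parity_code_eq_0_iff subsetD subsetI subset_antisym)
qed

lemma card_filter_Un_disjoint:
  assumes "finite A" "finite B" "A \<inter> B = {}"
  shows "card {x \<in> A \<union> B. P x} = card {x \<in> A. P x} + card {x \<in> B. P x}"
proof -
  have "{x \<in> A \<union> B. P x} = {x \<in> A. P x} \<union> {x \<in> B. P x}" by auto
  then show ?thesis using assms by (simp add: card_Un_disjoint disjoint_iff)
qed

abbreviation separating_columns :: "nat multiset set" where
  "separating_columns \<equiv> {{#0, 1, 2#}, {#0, 0, 1#}, {#0, 0, 2#}}"

lemma separating_columns_two_zeros:
  assumes "a = 0" "b = 0" "c \<in> {1, 2}"
  shows "{#a, b, c#} \<in> separating_columns" "{#a, c, b#} \<in> separating_columns"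
    "{#c, a, b#} \<in> separating_columns"
  using assms by (auto simp: add_mset_commute)

lemma separating_columns_one_zero:
  assumes "a = 0" "{b, c} = {1, 2}"
  shows "{#a, b, c#} \<in> separating_columns"
  using assms by (auto simp: doubleton_eq_iff add_mset_commute)

lemma parity_code_odd_cut:
  assumes "finite I" "finite B" "finite C" "I \<inter> B = {}" "I \<inter> C = {}" "B \<inter> C = {}"
    and "k < m" "k \<notin> I \<union> B \<union> C" "odd (card {x \<in> B \<union> C. W k x})"
  shows "{parity_code W m (I \<union> B) ! k, parity_code W m (I \<union> C) ! k} = {1, 2}"
proof -
  have "odd (card {x \<in> I \<union> B. W k x}) \<noteq> odd (card {x \<in> I \<union> C. W k x})"
    using assms card_filter_Un_disjoint[of I B "W k"] card_filter_Un_disjoint[of I C "W k"]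
      card_filter_Un_disjoint[of B C "W k"]
    by auto
  then show ?thesis
    using assms(7,8) by (auto simp: nth_parity_code)
qed

lemma separating_column_of_odd_cut:
  assumes "finite I" "finite B" "finite C"
    and "I \<inter> A = {}" "I \<inter> B = {}" "I \<inter> C = {}" "A \<inter> B = {}" "A \<inter> C = {}" "B \<inter> C = {}"
    and "A \<union> B \<union> C \<subseteq> {..<m}" "\<not> even_cut W (A \<union> B \<union> C) A"
  shows "\<exists>k<m. {#parity_code W m (I \<union> A) ! k, parity_code W m (I \<union> B) ! k,
           parity_code W m (I \<union> C) ! k#} \<in> separating_columns"
proof -
  have "A \<union> B \<union> C - A = B \<union> C" using assms(7,8) by blast
  then obtain k where k: "k \<in> A" "odd (card {x \<in> B \<union> C. W k x})"
    using assms(11) unfolding even_cut_def by auto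
  then have "k < m" using assms(10) by blast
  have "{#parity_code W m (I \<union> A) ! k, parity_code W m (I \<union> B) ! k,
      parity_code W m (I \<union> C) ! k#} \<in> separating_columns"
  proof (rule separating_columns_one_zero)
    show "parity_code W m (I \<union> A) ! k = 0"
      using k \<open>k < m\<close> by (simp add: parity_code_zero)
    show "{parity_code W m (I \<union> B) ! k, parity_code W m (I \<union> C) ! k} = {1, 2}"
      using assms k \<open>k < m\<close> by (intro parity_code_odd_cut) auto
  qed
  with \<open>k < m\<close> show ?thesis by blast
qed

lemma parity_code_separating_column:
  assumes sep: "parity_separating W {..<m}"
    and sub: "T1 \<subseteq> {..<m}" "T2 \<subseteq> {..<m}" "T3 \<subseteq> {..<m}"
    and card: "card T2 = card T1" "card T3 = card T1"
    and dist: "T1 \<noteq> T2"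
  shows "\<exists>k<m. {#parity_code W m T1 ! k, parity_code W m T2 ! k, parity_code W m T3 ! k#}
           \<in> separating_columns"
proof (cases "\<exists>k. k \<in> T1 \<inter> T2 - T3 \<or> k \<in> T1 \<inter> T3 - T2 \<or> k \<in> T2 \<inter> T3 - T1")
  case True
  then obtain k where k: "k \<in> T1 \<inter> T2 - T3 \<or> k \<in> T1 \<inter> T3 - T2 \<or> k \<in> T2 \<inter> T3 - T1"
    by blast
  then have "k < m" using sub by blast
  from k consider "k \<in> T1" "k \<in> T2" "k \<notin> T3" | "k \<in> T1" "k \<in> T3" "k \<notin> T2"
    | "k \<in> T2" "k \<in> T3" "k \<notin> T1"
    by blast
  then have "{#parity_code W m T1 ! k, parity_code W m T2 ! k, parity_code W m T3 ! k#}
      \<in> separating_columns"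
  proof cases
    case 1
    then show ?thesis using \<open>k < m\<close>
      by (intro separating_columns_two_zeros(1) parity_code_zero parity_code_nonzero)
  next
    case 2
    then show ?thesis using \<open>k < m\<close>
      by (intro separating_columns_two_zeros(2) parity_code_zero parity_code_nonzero)
  next
    case 3
    then show ?thesis using \<open>k < m\<close>
      by (intro separating_columns_two_zeros(3) parity_code_zero parity_code_nonzero)
  qed
  with \<open>k < m\<close> show ?thesis by blast
next
  case False
  define I where "I = T1 \<inter> T2 \<inter> T3"
  define A where "A = T1 - I"
  define B where "B = T2 - I"
  define C where "C = T3 - I"
  have T: "T1 = I \<union> A" "T2 = I \<union> B" "T3 = I \<union> C"
    unfolding I_def A_def B_def C_def by blast+
  have disj: "I \<inter> A = {}" "I \<inter> B = {}" "I \<inter> C = {}" "A \<inter> B = {}" "A \<inter> C = {}" "B \<inter> C = {}"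
    using False unfolding I_def A_def B_def C_def by blast+
  have fin: "finite I" "finite A" "finite B" "finite C"
    using sub unfolding T by (meson finite_Un finite_lessThan finite_subset)+
  have ABC: "A \<union> B \<union> C \<subseteq> {..<m}" using sub unfolding T by blast
  have cards: "card B = card A" "card C = card A"
    using card fin disj unfolding T by (simp_all add: card_Un_disjoint)
  have "A \<noteq> {}"
  proof
    assume "A = {}"
    then have "T1 \<subseteq> T2" unfolding T by blast
    moreover have "finite T2" using fin unfolding T by blast
    ultimately show False
      using card(1) dist card_subset_eq by metis
  qed
  then have "0 < card A" using fin(2) by auto
  then have "\<not> (even_cut W (A \<union> B \<union> C) A \<and> even_cut W (A \<union> B \<union> C) B \<and> even_cut W (A \<union> B \<union> C) C)"
    using sep ABC disj(4-6) cards unfolding parity_separating_def by simp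
  moreover have "B \<union> A \<union> C = A \<union> B \<union> C" "C \<union> A \<union> B = A \<union> B \<union> C" by blast+
  ultimately consider "\<not> even_cut W (A \<union> B \<union> C) A" | "\<not> even_cut W (B \<union> A \<union> C) B"
    | "\<not> even_cut W (C \<union> A \<union> B) C"
    by argo
  then show ?thesis
  proof cases
    case 1
    then show ?thesis
      unfolding T using fin disj ABC by (intro separating_column_of_odd_cut)
  next
    case 2
    then have "\<exists>k<m. {#parity_code W m (I \<union> B) ! k, parity_code W m (I \<union> A) ! k,
        parity_code W m (I \<union> C) ! k#} \<in> separating_columns"
      using fin disj ABC by (intro separating_column_of_odd_cut) blast+
    moreover have "{#parity_code W m (I \<union> B) ! k, parity_code W m (I \<union> A) ! k,
        parity_code W m (I \<union> C) ! k#} = {#parity_code W m (I \<union> A) ! k,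
        parity_code W m (I \<union> B) ! k, parity_code W m (I \<union> C) ! k#}" for k
      by (simp add: add_mset_commute)
    ultimately show ?thesis unfolding T by metis
  next
    case 3
    then have "\<exists>k<m. {#parity_code W m (I \<union> C) ! k, parity_code W m (I \<union> A) ! k,
        parity_code W m (I \<union> B) ! k#} \<in> separating_columns"
      using fin disj ABC by (intro separating_column_of_odd_cut) blast+
    moreover have "{#parity_code W m (I \<union> C) ! k, parity_code W m (I \<union> A) ! k,
        parity_code W m (I \<union> B) ! k#} = {#parity_code W m (I \<union> A) ! k,
        parity_code W m (I \<union> B) ! k, parity_code W m (I \<union> C) ! k#}" for k
      by (simp add: add_mset_commute)
    ultimately show ?thesis unfolding T by metis
  qed
qed

lemma admissible_parity_codes:
  assumes "parity_separating W {..<m}"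
  shows "admissible m (parity_code W m ` {T. T \<subseteq> {..<m} \<and> card T = t})"
  unfolding admissible_def
proof (safe)
  fix T
  show "parity_code W m T \<in> ternary_vectors m" by (rule parity_code_in_ternary_vectors)
next
  fix T U assume TU: "T \<subseteq> {..<m}" "U \<subseteq> {..<m}" "card U = card T"
    "parity_code W m T \<noteq> parity_code W m U"
  then have fin: "finite T" "finite U" by (auto intro: finite_subset)
  with TU obtain i j where "i \<in> T - U" "j \<in> U - T"
    by (metis Diff_eq_empty_iff card_subset_eq ex_in_conv)
  moreover from this have "i < m" "j < m" using TU by auto
  ultimately show "\<exists>i<m. \<exists>j<m. parity_code W m T ! i = 0 \<and> parity_code W m U ! i \<noteq> 0 \<and>
      parity_code W m T ! j \<noteq> 0 \<and> parity_code W m U ! j = 0"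
    by (metis DiffE parity_code_eq_0_iff)
next
  fix T1 T2 T3 assume "T1 \<subseteq> {..<m}" "T2 \<subseteq> {..<m}" "T3 \<subseteq> {..<m}"
    "card T2 = card T1" "card T3 = card T1" "parity_code W m T1 \<noteq> parity_code W m T2"
  then show "\<exists>k<m. {#parity_code W m T1 ! k, parity_code W m T2 ! k, parity_code W m T3 ! k#}
      \<in> separating_columns"
    using assms by (intro parity_code_separating_column) auto
qed

lemma ex_admissible_parity_codes:
  assumes "parity_separating W {..<m}" "w \<le> m"
  shows "\<exists>S. admissible m S \<and> finite S \<and> card S = m choose w \<and> (\<forall>s\<in>S. weight s = w)"
proof (intro exI conjI)
  let ?F = "{T. T \<subseteq> {..<m} \<and> card T = m - w}"
  show "admissible m (parity_code W m ` ?F)"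
    using assms(1) by (rule admissible_parity_codes)
  show "finite (parity_code W m ` ?F)" by simp
  have "inj_on (parity_code W m) ?F"
    using inj_on_parity_code by (rule inj_on_subset) auto
  then show "card (parity_code W m ` ?F) = m choose w"
    using n_subsets[of "{..<m}" "m - w"] binomial_symmetric[OF assms(2)] by (simp add: card_image)
  show "\<forall>s \<in> parity_code W m ` ?F. weight s = w"
    using assms(2) by (auto simp: weight_parity_code)
qed

(* Recursion on the list only, with an if on k, so that simp can evaluate it on numerals. *)
primrec combs :: "nat \<Rightarrow> 'a list \<Rightarrow> 'a list list" where
  "combs k [] = (if k = 0 then [[]] else [])"
| "combs k (x # xs) = (if k = 0 then [[]] else map ((#) x) (combs (k - 1) xs) @ combs k xs)"

lemma combs_complete:
  "distinct xs \<Longrightarrow> A \<subseteq> set xs \<Longrightarrow> card A = k \<Longrightarrow>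
     \<exists>ys\<in>set (combs k xs). set ys = A \<and> distinct ys"
proof (induction xs arbitrary: k A)
  case Nil
  then show ?case by simp
next
  case (Cons x xs)
  have "finite A" using Cons.prems(2) finite_subset by blast
  show ?case
  proof (cases "k = 0")
    case True
    then show ?thesis using Cons.prems(3) \<open>finite A\<close> by simp
  next
    case False
    show ?thesis
    proof (cases "x \<in> A")
      case True
      have "A - {x} \<subseteq> set xs" "card (A - {x}) = k - 1"
        using Cons.prems True \<open>finite A\<close> by auto
      then obtain ys where "ys \<in> set (combs (k - 1) xs)" "set ys = A - {x}" "distinct ys"
        using Cons.IH[of "A - {x}" "k - 1"] Cons.prems(1) by auto
      then show ?thesis
        using False True Cons.prems(1) by (intro bexI[of _ "x # ys"]) auto
    next
      case False
      then have "A \<subseteq> set xs" using Cons.prems(2) by auto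
      then show ?thesis
        using Cons.IH[of A k] Cons.prems \<open>k \<noteq> 0\<close> by auto
    qed
  qed
qed

definition anchored_combs :: "nat \<Rightarrow> 'a list \<Rightarrow> 'a list list" where
  "anchored_combs s xs = map ((#) (hd xs)) (combs (s - 1) (tl xs))"

lemma anchored_combs_complete:
  assumes "distinct xs" "hd xs \<in> P" "P \<subseteq> set xs" "card P = s"
  shows "\<exists>ps\<in>set (anchored_combs s xs). set ps = P"
proof (cases xs)
  case Nil
  then show ?thesis using assms(2,3) by auto
next
  case (Cons x xs')
  have "finite P" using assms(3) finite_subset by blast
  have "P - {x} \<subseteq> set xs'" "card (P - {x}) = s - 1"
    using assms Cons \<open>finite P\<close> by auto
  then obtain ys where "ys \<in> set (combs (s - 1) xs')" "set ys = P - {x}"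
    using combs_complete[of xs' "P - {x}" "s - 1"] assms(1) Cons by auto
  then show ?thesis
    using Cons assms(2) by (intro bexI[of _ "x # ys"]) (auto simp: anchored_combs_def)
qed

definition even_cut_list :: "('a \<Rightarrow> 'a \<Rightarrow> bool) \<Rightarrow> 'a list \<Rightarrow> 'a list \<Rightarrow> bool" where
  "even_cut_list W xs ps \<longleftrightarrow>
     list_all (\<lambda>j. even (length (filter (\<lambda>x. x \<notin> set ps \<and> W j x) xs))) ps"

lemma even_cut_list_iff:
  assumes "distinct xs"
  shows "even_cut_list W xs ps \<longleftrightarrow> even_cut W (set xs) (set ps)"
proof -
  have "length (filter (\<lambda>x. x \<notin> set ps \<and> W j x) xs) = card {x \<in> set xs - set ps. W j x}" for j
  proof -
    have "length (filter (\<lambda>x. x \<notin> set ps \<and> W j x) xs)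
        = card (set (filter (\<lambda>x. x \<notin> set ps \<and> W j x) xs))"
      using distinct_card[OF distinct_filter[OF assms]] by simp
    also have "set (filter (\<lambda>x. x \<notin> set ps \<and> W j x) xs) = {x \<in> set xs - set ps. W j x}"
      by auto
    finally show ?thesis .
  qed
  then show ?thesis
    by (simp add: even_cut_list_def even_cut_def list_all_iff)
qed

(* The first block always contains the head of the list, which removes the symmetry between the
   blocks; "if _ then _ else True" rather than an implication makes simp evaluate the inner search
   only when needed. *)
definition no_even_cut_pair :: "('a \<Rightarrow> 'a \<Rightarrow> bool) \<Rightarrow> nat \<Rightarrow> 'a list \<Rightarrow> 'a list \<Rightarrow> bool" where
  "no_even_cut_pair W s xs ys \<longleftrightarrow>
     list_all (\<lambda>qs. if even_cut_list W xs qs then \<not> even_cut_list W xs (filter (\<lambda>x. x \<notin> set qs) ys)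
                    else True)
       (anchored_combs s ys)"

definition no_even_cut_triple :: "('a \<Rightarrow> 'a \<Rightarrow> bool) \<Rightarrow> nat \<Rightarrow> 'a list \<Rightarrow> bool" where
  "no_even_cut_triple W s xs \<longleftrightarrow>
     list_all (\<lambda>ps. if even_cut_list W xs ps then no_even_cut_pair W s xs (filter (\<lambda>x. x \<notin> set ps) xs)
                    else True)
       (anchored_combs s xs)"

lemma no_even_cut_pair_sound:
  assumes check: "no_even_cut_pair W s xs ys" and "distinct xs" "distinct ys" "0 < s"
    and "set ys = B \<union> C" "B \<inter> C = {}" "card B = s" "card C = s"
    and "even_cut W (set xs) B" "even_cut W (set xs) C"
  shows False
proof -
  have "ys \<noteq> []" using assms(4,5,7) by auto
  then have "hd ys \<in> B \<union> C" using assms(5) hd_in_set by blast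
  then obtain P Q where "(P, Q) \<in> {(B, C), (C, B)}" "hd ys \<in> P" by blast
  then have PQ: "set ys = P \<union> Q" "P \<inter> Q = {}" "card P = s"
      "even_cut W (set xs) P" "even_cut W (set xs) Q"
    using assms(5-10) by auto
  then obtain qs where qs: "qs \<in> set (anchored_combs s ys)" "set qs = P"
    using anchored_combs_complete[of ys P s] assms(3) \<open>hd ys \<in> P\<close> by auto
  have "set (filter (\<lambda>x. x \<notin> set qs) ys) = Q" using PQ qs by auto
  then show False
    using check qs PQ \<open>distinct xs\<close> by (auto simp: no_even_cut_pair_def list_all_iff even_cut_list_iff)
qed

lemma no_even_cut_triple_sound:
  assumes check: "no_even_cut_triple W s xs" and "distinct xs" "0 < s"
    and "set xs = A \<union> B \<union> C" "A \<inter> B = {}" "A \<inter> C = {}" "B \<inter> C = {}"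
    and "card A = s" "card B = s" "card C = s"
    and "even_cut W (set xs) A" "even_cut W (set xs) B" "even_cut W (set xs) C"
  shows False
proof -
  have "xs \<noteq> []" using assms(3,4,8) by auto
  then have "hd xs \<in> A \<union> B \<union> C" using assms(4) hd_in_set by blast
  then obtain P Q R where "(P, Q, R) \<in> {(A, B, C), (B, A, C), (C, A, B)}" "hd xs \<in> P" by blast
  then have PQR: "set xs = P \<union> Q \<union> R" "P \<inter> Q = {}" "P \<inter> R = {}" "Q \<inter> R = {}"
      "card P = s" "card Q = s" "card R = s"
      "even_cut W (set xs) P" "even_cut W (set xs) Q" "even_cut W (set xs) R"
    using assms(4-13) by auto
  then obtain ps where ps: "ps \<in> set (anchored_combs s xs)" "set ps = P"
    using anchored_combs_complete[of xs P s] assms(2) \<open>hd xs \<in> P\<close> by auto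
  then have "no_even_cut_pair W s xs (filter (\<lambda>x. x \<notin> set ps) xs)"
    using check PQR \<open>distinct xs\<close> by (auto simp: no_even_cut_triple_def list_all_iff even_cut_list_iff)
  moreover have "set (filter (\<lambda>x. x \<notin> set ps) xs) = Q \<union> R" using PQR ps by auto
  ultimately show False
    using no_even_cut_pair_sound PQR \<open>distinct xs\<close> \<open>0 < s\<close> by (metis distinct_filter)
qed

lemma parity_separating_by_check:
  assumes "distinct xs"
    and check: "\<And>s. 0 < s \<Longrightarrow> 3 * s \<le> length xs \<Longrightarrow> list_all (no_even_cut_triple W s) (combs (3 * s) xs)"
  shows "parity_separating W (set xs)"
  unfolding parity_separating_def
proof (intro allI impI notI)
  fix A B C
  assume sub: "A \<union> B \<union> C \<subseteq> set xs" and disj: "A \<inter> B = {}" "A \<inter> C = {}" "B \<inter> C = {}"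
    and cards: "0 < card A" "card B = card A" "card C = card A"
    and even: "even_cut W (A \<union> B \<union> C) A \<and> even_cut W (A \<union> B \<union> C) B \<and> even_cut W (A \<union> B \<union> C) C"
  have "finite A" "finite B" "finite C" using sub by (auto intro: finite_subset)
  then have card_ABC: "card (A \<union> B \<union> C) = 3 * card A"
    using disj cards by (simp add: card_Un_disjoint Int_Un_distrib2)
  moreover have "card (A \<union> B \<union> C) \<le> length xs"
    using sub card_mono[OF finite_set sub] distinct_card[OF assms(1)] by simp
  ultimately obtain ys where ys: "ys \<in> set (combs (3 * card A) xs)" "set ys = A \<union> B \<union> C" "distinct ys"
    using combs_complete[OF assms(1) sub] by metis
  then have "no_even_cut_triple W (card A) ys"
    using check[of "card A"] cards(1) card_ABC \<open>card (A \<union> B \<union> C) \<le> length xs\<close>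
    by (auto simp: list_all_iff)
  then show False
    using no_even_cut_triple_sound[of W "card A" ys A B C] ys disj cards even by auto
qed

definition witness_rows :: "nat list list" where
  "witness_rows = [[2,3,4,5,6,8,9], [2,4,5,6,8,9,10], [0,1,3,6,7,8,10], [0,1,10], [0,1,3,6,7,9,10],
     [0,1,2,3,6,7,10], [0,1,3,7,10], [0,3,10], [2,5,9], [0,1,3,5,6,7,10], [0,2,4,5,6,8,9]]"

definition witness_relation :: "nat \<Rightarrow> nat \<Rightarrow> bool" where
  "witness_relation k x \<longleftrightarrow> x \<in> set (witness_rows ! k)"

(* Lookup table for the search below; simp normalises (1::nat) to Suc 0, hence the second row. *)
lemma witness_relation_simps:
  "witness_relation 0 x \<longleftrightarrow> x \<in> {2, 3, 4, 5, 6, 8, 9}"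
  "witness_relation (Suc 0) x \<longleftrightarrow> x \<in> {2, 4, 5, 6, 8, 9, 10}"
  "witness_relation 2 x \<longleftrightarrow> x \<in> {0, 1, 3, 6, 7, 8, 10}"
  "witness_relation 3 x \<longleftrightarrow> x \<in> {0, 1, 10}"
  "witness_relation 4 x \<longleftrightarrow> x \<in> {0, 1, 3, 6, 7, 9, 10}"
  "witness_relation 5 x \<longleftrightarrow> x \<in> {0, 1, 2, 3, 6, 7, 10}"
  "witness_relation 6 x \<longleftrightarrow> x \<in> {0, 1, 3, 7, 10}"
  "witness_relation 7 x \<longleftrightarrow> x \<in> {0, 3, 10}"
  "witness_relation 8 x \<longleftrightarrow> x \<in> {2, 5, 9}"
  "witness_relation 9 x \<longleftrightarrow> x \<in> {0, 1, 3, 5, 6, 7, 10}"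
  "witness_relation 10 x \<longleftrightarrow> x \<in> {0, 2, 4, 5, 6, 8, 9}"
  by (simp_all add: witness_relation_def witness_rows_def)

(* The if-form makes simp stop at the first failing element. *)
lemma list_all_Cons_if: "list_all P (x # xs) \<longleftrightarrow> (if P x then list_all P xs else False)"
  by simp

(* The vertex list is written out: simp would unfold [0..<11] into Suc-terms missed by the table. *)
lemma witness_relation_no_even_cut_triples:
  assumes "s \<in> {1, 2, 3}"
  shows "list_all (no_even_cut_triple witness_relation s) (combs (3 * s) [0, 1, 2, 3, 4, 5, 6, 7, 8, 9, 10])"
  using assms
  by (elim insertE emptyE) (simp_all add: no_even_cut_triple_def no_even_cut_pair_def anchored_combs_def even_cut_list_def
      witness_relation_simps list_all_Cons_if del: list.pred_inject(2))

lemma parity_separating_witness_relation: "parity_separating witness_relation {..<11}"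
proof -
  have list: "[0..<11] = [0, 1, 2, 3, 4, 5, 6, 7, 8, 9, 10::nat]" by (simp add: upt_rec)
  have "parity_separating witness_relation (set [0..<11])"
  proof (rule parity_separating_by_check)
    fix s :: nat assume "0 < s" "3 * s \<le> length [0..<11]"
    then have "s \<in> {1, 2, 3}" by auto
    then show "list_all (no_even_cut_triple witness_relation s) (combs (3 * s) [0..<11])"
      unfolding list by (rule witness_relation_no_even_cut_triples)
  qed simp
  then show ?thesis by (simp add: lessThan_atLeast0)
qed

theorem lemma2p13:
  shows "\<forall>(m, w) \<in> {(11::nat, 7::nat), (11, 6), (10, 6)}.
           \<exists>S. admissible m S \<and> finite S \<and> card S = m choose w \<and> (\<forall>s\<in>S. weight s = w)"
proof -
  have "parity_separating witness_relation {..<m}" if "m \<le> 11" for m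
    using parity_separating_witness_relation by (rule parity_separating_subset) (use that in auto)
  then have "\<exists>S. admissible m S \<and> finite S \<and> card S = m choose w \<and> (\<forall>s\<in>S. weight s = w)"
    if "w \<le> m" "m \<le> 11" for m w
    using ex_admissible_parity_codes that by blast
  then show ?thesis by simp
qed

end
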